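(* Consider the Multiple-Path Orienteering Problem (MOP) with $M$ robots on a metric graph $G=(\mathcal{V},\mathcal{E})$: choose paths $\mathcal{Q}_1,\dots,\mathcal{Q}_M$, where $\mathcal{Q}_i$ starts at the given vertex $v_{s_i}$ and has cost $C(\mathcal{Q}_i)\le B$, so as to maximize the team reward $f(\{\mathcal{Q}_1,\dots,\mathcal{Q}_M\})=g\big(\bigcup_{i=1}^M\mathcal{Q}_i\big)$. Then there exists an optimal solution $\mathcal{Q}^*=\{\mathcal{Q}^*_1,\dots,\mathcal{Q}^*_M\}$ of the MOP whose paths do not overlap, i.e. $\mathcal{Q}^*_i\cap\mathcal{Q}^*_j=\emptyset$ for all $i\ne j$.
   Context: $G=(\mathcal{V},\mathcal{E})$ is a graph with metric edge weights. A path is an ordered sequence of non-repeated vertices, identified also with its set of vertices; its cost $C(\cdot)$ is the sum of the edge weights along it. The reward function $g:2^{\mathcal{V}}\to\mathbb{R}_{\ge 0}$ is normalized ($g(\mathcal{A})=0$ iff $\mathcal{A}=\emptyset$), monotone non-decreasing and submodular. Vertices visited by several robots contribute to the team reward only once. *)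

theory Defs
  imports Complex_Main
begin

definition metric_weights :: "'a set \<Rightarrow> ('a \<Rightarrow> 'a \<Rightarrow> real) \<Rightarrow> bool" where
  "metric_weights V w \<longleftrightarrow>
     (\<forall>x\<in>V. \<forall>y\<in>V. w x y \<ge> 0 \<and> w x y = w y x \<and> (w x y = 0 \<longleftrightarrow> x = y)) \<and>
     (\<forall>x\<in>V. \<forall>y\<in>V. \<forall>z\<in>V. w x z \<le> w x y + w y z)"

definition normalized :: "'a set \<Rightarrow> ('a set \<Rightarrow> real) \<Rightarrow> bool" where
  "normalized V g \<longleftrightarrow> (\<forall>A\<subseteq>V. g A \<ge> 0 \<and> (g A = 0 \<longleftrightarrow> A = {}))"

definition monotone_set_fun :: "'a set \<Rightarrow> ('a set \<Rightarrow> real) \<Rightarrow> bool" where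
  "monotone_set_fun V g \<longleftrightarrow> (\<forall>A B. A \<subseteq> B \<and> B \<subseteq> V \<longrightarrow> g A \<le> g B)"

definition submodular :: "'a set \<Rightarrow> ('a set \<Rightarrow> real) \<Rightarrow> bool" where
  "submodular V g \<longleftrightarrow> (\<forall>A B x. A \<subseteq> B \<and> B \<subseteq> V \<and> x \<in> V - B \<longrightarrow>
      g (insert x B) - g B \<le> g (insert x A) - g A)"

definition is_path :: "'a set \<Rightarrow> 'a list \<Rightarrow> bool" where
  "is_path V xs \<longleftrightarrow> xs \<noteq> [] \<and> distinct xs \<and> set xs \<subseteq> V"

definition path_cost :: "('a \<Rightarrow> 'a \<Rightarrow> real) \<Rightarrow> 'a list \<Rightarrow> real" where
  "path_cost w xs = sum_list (map (\<lambda>(x, y). w x y) (zip xs (tl xs)))"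

definition mop_feasible :: "'a set \<Rightarrow> ('a \<Rightarrow> 'a \<Rightarrow> real) \<Rightarrow> real \<Rightarrow> nat \<Rightarrow> (nat \<Rightarrow> 'a)
    \<Rightarrow> (nat \<Rightarrow> 'a list) \<Rightarrow> bool" where
  "mop_feasible V w B M s Q \<longleftrightarrow>
     (\<forall>i<M. is_path V (Q i) \<and> hd (Q i) = s i \<and> path_cost w (Q i) \<le> B)"

definition team_reward :: "('a set \<Rightarrow> real) \<Rightarrow> nat \<Rightarrow> (nat \<Rightarrow> 'a list) \<Rightarrow> real" where
  "team_reward g M Q = g (\<Union>i<M. set (Q i))"

definition mop_optimal :: "'a set \<Rightarrow> ('a \<Rightarrow> 'a \<Rightarrow> real) \<Rightarrow> ('a set \<Rightarrow> real) \<Rightarrow> real \<Rightarrow> nat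
    \<Rightarrow> (nat \<Rightarrow> 'a) \<Rightarrow> (nat \<Rightarrow> 'a list) \<Rightarrow> bool" where
  "mop_optimal V w g B M s Q \<longleftrightarrow> mop_feasible V w B M s Q \<and>
     (\<forall>Q'. mop_feasible V w B M s Q' \<longrightarrow> team_reward g M Q' \<le> team_reward g M Q)"

end

theory Submission
  imports Defs
begin

text \<open>
  Since every team reward is a value of \<open>g\<close> on a subset of the finite set \<open>V\<close>, an optimal
  solution exists. Given one, assign every visited vertex to a single owning robot (the robot
  starting there, if any, and otherwise some robot visiting it) and let each robot skip the vertices
  it does not own. The union of the visited vertices is unchanged, hence so is the reward, and by the
  triangle inequality shortcutting a path never increases its cost.
\<close>

lemma path_cost_Nil [simp]: "path_cost w [] = 0"
  by (simp add: path_cost_def)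

lemma path_cost_singleton [simp]: "path_cost w [x] = 0"
  by (simp add: path_cost_def)

lemma path_cost_Cons_Cons [simp]: "path_cost w (x # y # ys) = w x y + path_cost w (y # ys)"
  by (simp add: path_cost_def)

lemma path_cost_shortcut:
  assumes "metric_weights V w" "x \<in> V" "y \<in> V" "set ys \<subseteq> V"
  shows "path_cost w (x # ys) \<le> w x y + path_cost w (y # ys)"
proof (cases ys)
  case Nil
  then show ?thesis using assms by (simp add: metric_weights_def)
next
  case (Cons z zs)
  then have "w x z \<le> w x y + w y z" using assms by (simp add: metric_weights_def)
  then show ?thesis using Cons by simp
qed

lemma path_cost_filter_le:
  assumes "metric_weights V w" "x \<in> V" "set xs \<subseteq> V"
  shows "path_cost w (x # filter P xs) \<le> path_cost w (x # xs)"
  using assms(2,3)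
proof (induction xs arbitrary: x)
  case Nil
  then show ?case by simp
next
  case (Cons y ys)
  show ?case
  proof (cases "P y")
    case True
    then show ?thesis using Cons.IH[of y] Cons.prems by simp
  next
    case False
    have "path_cost w (x # filter P ys) \<le> path_cost w (x # ys)"
      using Cons.IH[of x] Cons.prems by simp
    also have "\<dots> \<le> w x y + path_cost w (y # ys)"
      using path_cost_shortcut[OF assms(1), of x y ys] Cons.prems by simp
    finally show ?thesis using False by simp
  qed
qed

lemma mop_feasible_filter:
  assumes "metric_weights V w" "mop_feasible V w B M s Q" "\<forall>i<M. P i (s i)"
  shows "mop_feasible V w B M s (\<lambda>i. filter (P i) (Q i))"
  unfolding mop_feasible_def
proof (intro allI impI)
  fix i assume "i < M"
  then have path: "is_path V (Q i)" and start: "hd (Q i) = s i" and cost: "path_cost w (Q i) \<le> B"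
    and keep: "P i (s i)"
    using assms(2,3) by (auto simp: mop_feasible_def)
  have Q_eq: "Q i = s i # tl (Q i)"
    using path start by (metis is_path_def list.collapse)
  then have filter_eq: "filter (P i) (Q i) = s i # filter (P i) (tl (Q i))"
    using keep by (metis filter.simps(2))
  have "s i \<in> V" "set (tl (Q i)) \<subseteq> V"
    using path Q_eq by (metis is_path_def list.set_intros(1) set_subset_Cons subset_code(1) subset_trans)+
  then have "path_cost w (filter (P i) (Q i)) \<le> path_cost w (Q i)"
    using filter_eq Q_eq path_cost_filter_le[OF assms(1)] by metis
  moreover have "is_path V (filter (P i) (Q i))"
    using path filter_eq unfolding is_path_def by (metis distinct_filter filter_is_subset list.distinct(1) order_trans)
  ultimately show "is_path V (filter (P i) (Q i)) \<and> hd (filter (P i) (Q i)) = s i \<and>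
      path_cost w (filter (P i) (Q i)) \<le> B"
    using filter_eq cost by simp
qed

lemma mop_optimal_exists:
  assumes "finite V" "B \<ge> 0" "\<forall>i<M. s i \<in> V"
  shows "\<exists>Q. mop_optimal V w g B M s Q"
proof -
  define R where "R = team_reward g M ` {Q. mop_feasible V w B M s Q}"
  have "R \<subseteq> g ` Pow V"
    by (auto simp: R_def team_reward_def mop_feasible_def is_path_def)
  then have "finite R"
    using assms(1) by (meson finite_Pow_iff finite_imageI finite_subset)
  moreover have "mop_feasible V w B M s (\<lambda>i. [s i])"
    using assms(2,3) by (simp add: mop_feasible_def is_path_def)
  then have "R \<noteq> {}"
    by (auto simp: R_def)
  ultimately have "Max R \<in> R" "\<forall>r\<in>R. r \<le> Max R"
    by simp_all
  then show ?thesis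
    unfolding mop_optimal_def R_def by force
qed

lemma exists_owner:
  fixes s :: "nat \<Rightarrow> 'a" and Q :: "nat \<Rightarrow> 'a list"
  assumes "inj_on s {..<M}" "\<forall>i<M. s i \<in> set (Q i)"
  shows "\<exists>own. (\<forall>i<M. own (s i) = i) \<and>
    (\<forall>i<M. \<forall>v\<in>set (Q i). own v < M \<and> v \<in> set (Q (own v)))"
proof -
  define own where "own v = (if v \<in> s ` {..<M} then the_inv_into {..<M} s v
      else (LEAST i. i < M \<and> v \<in> set (Q i)))" for v
  have own_start: "own (s i) = i" if "i < M" for i
    using that assms(1) by (simp add: own_def the_inv_into_f_f)
  have "own v < M \<and> v \<in> set (Q (own v))" if "i < M" "v \<in> set (Q i)" for i v
  proof (cases "v \<in> s ` {..<M}")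
    case True
    then show ?thesis using own_start assms(2) by auto
  next
    case False
    then show ?thesis
      using LeastI[of "\<lambda>i. i < M \<and> v \<in> set (Q i)" i] that by (simp add: own_def)
  qed
  with own_start show ?thesis by blast
qed

lemma mop_feasible_disjoint_refinement:
  assumes "metric_weights V w" "inj_on s {..<M}" "mop_feasible V w B M s Q"
  shows "\<exists>Q'. mop_feasible V w B M s Q' \<and> (\<Union>i<M. set (Q' i)) = (\<Union>i<M. set (Q i)) \<and>
    (\<forall>i<M. \<forall>j<M. i \<noteq> j \<longrightarrow> set (Q' i) \<inter> set (Q' j) = {})"
proof -
  have "\<forall>i<M. s i \<in> set (Q i)"
    using assms(3) by (metis hd_in_set is_path_def mop_feasible_def)
  then obtain own where own_start: "\<forall>i<M. own (s i) = i"
    and own_visits: "\<forall>i<M. \<forall>v\<in>set (Q i). own v < M \<and> v \<in> set (Q (own v))"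
    using exists_owner[OF assms(2)] by blast
  define Q' where "Q' i = filter (\<lambda>v. own v = i) (Q i)" for i
  have "mop_feasible V w B M s Q'"
    unfolding Q'_def using mop_feasible_filter[OF assms(1,3)] own_start by simp
  moreover have "(\<Union>i<M. set (Q' i)) = (\<Union>i<M. set (Q i))"
    using own_visits by (fastforce simp: Q'_def)
  moreover have "\<forall>i<M. \<forall>j<M. i \<noteq> j \<longrightarrow> set (Q' i) \<inter> set (Q' j) = {}"
    by (auto simp: Q'_def)
  ultimately show ?thesis by blast
qed

theorem proposition1:
  fixes V :: "'a set" and w :: "'a \<Rightarrow> 'a \<Rightarrow> real" and g :: "'a set \<Rightarrow> real"
    and B :: real and M :: nat and s :: "nat \<Rightarrow> 'a"
  assumes "finite V"
    and "metric_weights V w"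
    and "normalized V g" and "monotone_set_fun V g" and "submodular V g"
    and "B \<ge> 0"
    and "\<forall>i<M. s i \<in> V"
    and "inj_on s {..<M}"
  shows "\<exists>Q. mop_optimal V w g B M s Q \<and>
           (\<forall>i<M. \<forall>j<M. i \<noteq> j \<longrightarrow> set (Q i) \<inter> set (Q j) = {})"
proof -
  obtain Q where opt: "mop_optimal V w g B M s Q"
    using mop_optimal_exists[OF assms(1,6,7)] by blast
  then have "mop_feasible V w B M s Q"
    by (simp add: mop_optimal_def)
  then obtain Q' where feasible: "mop_feasible V w B M s Q'"
    and same_union: "(\<Union>i<M. set (Q' i)) = (\<Union>i<M. set (Q i))"
    and disjoint: "\<forall>i<M. \<forall>j<M. i \<noteq> j \<longrightarrow> set (Q' i) \<inter> set (Q' j) = {}"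
    using mop_feasible_disjoint_refinement[OF assms(2,8)] by blast
  have "team_reward g M Q' = team_reward g M Q"
    using same_union by (simp add: team_reward_def)
  then have "mop_optimal V w g B M s Q'"
    using opt feasible by (simp add: mop_optimal_def)
  with disjoint show ?thesis by blast
qed

end
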